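(* Consider on $M_h$ with $2h=1$ the reduced $23$-spherical integrable system $(\ell_{34},G_{23})$, where $G_{23}=\ell_{12}^2+\ell_{13}^2+\ell_{14}^2$. The image of the momentum map $(\ell_{34},G_{23}):M_h\to\mathbb R^2$ has critical values $\mathfrak C_1: G_{23}=1-\ell_{34}^2$ and $\mathfrak C_2: G_{23}=0$, which are both codimension one elliptic.
   Context: $\mathbf L=(\ell_{12},\ell_{13},\ell_{14},\ell_{23},\ell_{24},\ell_{34})\in\mathbb R^6\cong\mathfrak{so}(4)^*$ with the Lie–Poisson bracket of $\mathfrak{so}(4)$ (extending $\ell_{ji}=-\ell_{ij}$: $\{\ell_{ij},\ell_{jk}\}=-\ell_{ik}$ for distinct $i,j,k$, and $\{\ell_{ij},\ell_{kl}\}=0$ when $\{i,j\}\cap\{k,l\}=\emptyset$). $M_h=\{\mathbf L:\sum_{i<j}\ell_{ij}^2=2h,\ \ell_{12}\ell_{34}-\ell_{13}\ell_{24}+\ell_{14}\ell_{23}=0\}\cong S^2\times S^2$ is a symplectic leaf. A codimension one elliptic critical value is one whose critical points have rank-one differential of the momentum map with an elliptic (purely imaginary eigenvalue) transverse linearisation. *)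

theory Defs
  imports "HOL-Analysis.Analysis"
begin

text \<open>Coordinates on so(4)* = real^6: index a of type 6 corresponds to the pair (i,j), i<j,
  in the order 12, 13, 14, 23, 24, 34 (the index 6 is the numeral 0 of type 6).\<close>

definition pr6 :: "6 \<Rightarrow> nat \<times> nat" where
  "pr6 a = (if a = 1 then (1,2) else if a = 2 then (1,3) else if a = 3 then (1,4)
            else if a = 4 then (2,3) else if a = 5 then (2,4) else (3,4))"

definition ell :: "nat \<Rightarrow> nat \<Rightarrow> real^6 \<Rightarrow> real" where
  "ell i j L = (\<Sum>a\<in>UNIV. if pr6 a = (i,j) then L $ a else if pr6 a = (j,i) then - (L $ a) else 0)"

definition kd :: "nat \<Rightarrow> nat \<Rightarrow> real" where
  "kd i j = (if i = j then 1 else 0)"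

text \<open>Lie--Poisson bracket of so(4) on coordinate functions:
  {l_ij, l_kl} = -(d_jk l_il - d_ik l_jl - d_jl l_ik + d_il l_jk);
  this gives {l_ij, l_jk} = - l_ik for distinct i,j,k and 0 for disjoint index pairs.\<close>
definition lp_bracket :: "nat \<Rightarrow> nat \<Rightarrow> nat \<Rightarrow> nat \<Rightarrow> real^6 \<Rightarrow> real" where
  "lp_bracket i j k l L =
     - (kd j k * ell i l L - kd i k * ell j l L - kd j l * ell i k L + kd i l * ell j k L)"

definition poisson_matrix :: "real^6 \<Rightarrow> real^6^6" where
  "poisson_matrix L = (\<chi> a b. lp_bracket (fst (pr6 a)) (snd (pr6 a)) (fst (pr6 b)) (snd (pr6 b)) L)"

definition grad6 :: "(real^6 \<Rightarrow> real) \<Rightarrow> real^6 \<Rightarrow> real^6" where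
  "grad6 f L = (\<chi> a. frechet_derivative f (at L) (axis a 1))"

text \<open>Hamiltonian vector field X_f, with components X_f^a = {x_a, f}.\<close>
definition ham_vf :: "(real^6 \<Rightarrow> real) \<Rightarrow> real^6 \<Rightarrow> real^6" where
  "ham_vf f L = poisson_matrix L *v grad6 f L"

definition casimir1 :: "real^6 \<Rightarrow> real" where
  "casimir1 L = (\<Sum>a\<in>UNIV. (L $ a)^2)"

definition pfaff :: "real^6 \<Rightarrow> real" where
  "pfaff L = ell 1 2 L * ell 3 4 L - ell 1 3 L * ell 2 4 L + ell 1 4 L * ell 2 3 L"

definition Mh :: "real \<Rightarrow> (real^6) set" where
  "Mh h = {L. casimir1 L = 2 * h \<and> pfaff L = 0}"

definition tangent_space :: "real^6 \<Rightarrow> (real^6) set" where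
  "tangent_space L = {v. frechet_derivative casimir1 (at L) v = 0 \<and> frechet_derivative pfaff (at L) v = 0}"

definition dmom_rank :: "(real^6 \<Rightarrow> real) \<Rightarrow> (real^6 \<Rightarrow> real) \<Rightarrow> real^6 \<Rightarrow> nat" where
  "dmom_rank f1 f2 L =
     dim ((\<lambda>v. (frechet_derivative f1 (at L) v, frechet_derivative f2 (at L) v)) ` tangent_space L)"

definition critical_point :: "(real^6 \<Rightarrow> real) \<Rightarrow> (real^6 \<Rightarrow> real) \<Rightarrow> real \<Rightarrow> real^6 \<Rightarrow> bool" where
  "critical_point f1 f2 h L \<longleftrightarrow> L \<in> Mh h \<and> dmom_rank f1 f2 L < 2"

definition critical_values :: "(real^6 \<Rightarrow> real) \<Rightarrow> (real^6 \<Rightarrow> real) \<Rightarrow> real \<Rightarrow> (real \<times> real) set" where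
  "critical_values f1 f2 h = (\<lambda>L. (f1 L, f2 L)) ` {L. critical_point f1 f2 h L}"

text \<open>mu is an eigenvalue of the map induced by the real linear map A on the quotient W/V
  (complexified): there is z = x + i y in W_C, z not in V_C, with A z - mu z in V_C.\<close>
definition trans_eigenvalue :: "(real^6 \<Rightarrow> real^6) \<Rightarrow> (real^6) set \<Rightarrow> (real^6) set \<Rightarrow> complex \<Rightarrow> bool" where
  "trans_eigenvalue A W V \<mu> \<longleftrightarrow>
     (\<exists>x\<in>W. \<exists>y\<in>W. (x \<notin> V \<or> y \<notin> V) \<and>
        A x - (Re \<mu> *\<^sub>R x - Im \<mu> *\<^sub>R y) \<in> V \<and>
        A y - (Im \<mu> *\<^sub>R x + Re \<mu> *\<^sub>R y) \<in> V)"

text \<open>Elliptic transverse linearisation at a rank-one point L: for the combination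
  f = a f1 + b f2 whose differential vanishes on T_L M_h, the linearisation of X_f at L,
  induced on W/V where W = (T_L orbit)^omega = T_L M_h \<inter> ker df1 \<inter> ker df2 and
  V = span {X_f1(L), X_f2(L)} (the orbit direction), has only purely imaginary nonzero eigenvalues.\<close>
definition elliptic_transverse :: "(real^6 \<Rightarrow> real) \<Rightarrow> (real^6 \<Rightarrow> real) \<Rightarrow> real^6 \<Rightarrow> bool" where
  "elliptic_transverse f1 f2 L \<longleftrightarrow>
     (\<exists>a b. (a, b) \<noteq> (0::real, 0::real) \<and>
        (\<forall>v\<in>tangent_space L. a * frechet_derivative f1 (at L) v + b * frechet_derivative f2 (at L) v = 0) \<and>
        (let A = frechet_derivative (ham_vf (\<lambda>M. a * f1 M + b * f2 M)) (at L);
             W = tangent_space L \<inter> {v. frechet_derivative f1 (at L) v = 0 \<and> frechet_derivative f2 (at L) v = 0};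
             V = span {ham_vf f1 L, ham_vf f2 L}
         in (\<exists>\<mu>. trans_eigenvalue A W V \<mu>) \<and>
            (\<forall>\<mu>. trans_eigenvalue A W V \<mu> \<longrightarrow> Re \<mu> = 0 \<and> Im \<mu> \<noteq> 0)))"

definition codim1_elliptic_value :: "(real^6 \<Rightarrow> real) \<Rightarrow> (real^6 \<Rightarrow> real) \<Rightarrow> real \<Rightarrow> real \<times> real \<Rightarrow> bool" where
  "codim1_elliptic_value f1 f2 h c \<longleftrightarrow>
     c \<in> critical_values f1 f2 h \<and>
     (\<forall>L\<in>Mh h. (f1 L, f2 L) = c \<longrightarrow>
         critical_point f1 f2 h L \<and> dmom_rank f1 f2 L = 1 \<and> elliptic_transverse f1 f2 L)"

definition G23 :: "real^6 \<Rightarrow> real" where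
  "G23 L = (ell 1 2 L)^2 + (ell 1 3 L)^2 + (ell 1 4 L)^2"

end

(*
  Write a = (l12, l13, l14) and b = (l34, -l24, l23), so that G23 = |a|^2 and the Pfaffian
  is a . b. Hamiltonian vector fields are tangent to M_h, and d(l34, G23) maps suitable ones to
  (l23^2 + l24^2, 0) and (c, 2 |a x b|^2), where |a x b|^2 = |a|^2 |b|^2 on M_h by Lagrange's
  identity. So the rank drops exactly where G23 = 0 or l23 = l24 = 0, i.e. G23 = 1 - l34^2, and
  it is one there except over (0, 1) and (+-1, 0).

  At a rank-one point L the differential of 2 l34(L) l34 + G23 (on C1), resp. G23 (on C2),
  vanishes on T M_h. Read in the transverse coordinates (0, l23, l24), resp. (l12, l13, l14), the
  linearisation of its Hamiltonian vector field is an infinitesimal rotation u |-> w x u about a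
  nonzero axis w, and the transverse directions are orthogonal to w. Skewness forces the real
  part of a transverse eigenvalue to vanish, and w x u = w . u = 0 forces u = 0, so the
  eigenvalues are the nonzero imaginary numbers +-i|w|.
*)

theory Submission
  imports Defs
begin

unbundle cross3_syntax

section \<open>Coordinates on so(4)*\<close>

lemma exhaust_6: "x = 0 \<or> x = 1 \<or> x = 2 \<or> x = 3 \<or> x = 4 \<or> x = 5" for x :: 6
proof (induct x)
  case (of_int z)
  then have "z = 0 \<or> z = 1 \<or> z = 2 \<or> z = 3 \<or> z = 4 \<or> z = 5" by fastforce
  then show ?case by auto
qed

lemma forall_6: "(\<forall>i :: 6. P i) \<longleftrightarrow> P 1 \<and> P 2 \<and> P 3 \<and> P 4 \<and> P 5 \<and> P 0"
  by (metis exhaust_6)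

lemma UNIV_6: "(UNIV :: 6 set) = {0, 1, 2, 3, 4, 5}"
  using exhaust_6 by auto

lemma sum_UNIV_6: "sum f (UNIV :: 6 set) = f 1 + f 2 + f 3 + f 4 + f 5 + f 0"
  unfolding UNIV_6 by (simp add: ac_simps)

lemma ell_coords:
  "ell 1 2 L = L$1" "ell 1 3 L = L$2" "ell 1 4 L = L$3"
  "ell 2 3 L = L$4" "ell 2 4 L = L$5" "ell 3 4 L = L$0"
  "ell 2 1 L = - L$1" "ell 3 1 L = - L$2" "ell 4 1 L = - L$3"
  "ell 3 2 L = - L$4" "ell 4 2 L = - L$5" "ell 4 3 L = - L$0"
  "ell 1 1 L = 0" "ell 2 2 L = 0" "ell 3 3 L = 0" "ell 4 4 L = 0"
  unfolding ell_def sum_UNIV_6 by (simp_all add: pr6_def)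

definition v6 :: "real \<Rightarrow> real \<Rightarrow> real \<Rightarrow> real \<Rightarrow> real \<Rightarrow> real \<Rightarrow> real^6" where
  "v6 a b c d e f = (\<chi> i. if i = 1 then a else if i = 2 then b else if i = 3 then c
                          else if i = 4 then d else if i = 5 then e else f)"

lemma v6_nth [simp]:
  "v6 a b c d e f $ 1 = a" "v6 a b c d e f $ 2 = b" "v6 a b c d e f $ 3 = c"
  "v6 a b c d e f $ 4 = d" "v6 a b c d e f $ 5 = e" "v6 a b c d e f $ 0 = f"
  by (simp_all add: v6_def)

lemma vec6_eq_iff:
  "(x :: real^6) = y \<longleftrightarrow>
     x$1 = y$1 \<and> x$2 = y$2 \<and> x$3 = y$3 \<and> x$4 = y$4 \<and> x$5 = y$5 \<and> x$0 = y$0"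
  by (simp add: vec_eq_iff forall_6)

lemma has_derivative_v6:
  assumes "(f1 has_derivative g1) F" "(f2 has_derivative g2) F" "(f3 has_derivative g3) F"
    "(f4 has_derivative g4) F" "(f5 has_derivative g5) F" "(f6 has_derivative g6) F"
  shows "((\<lambda>x. v6 (f1 x) (f2 x) (f3 x) (f4 x) (f5 x) (f6 x)) has_derivative
          (\<lambda>h. v6 (g1 h) (g2 h) (g3 h) (g4 h) (g5 h) (g6 h))) F"
proof -
  have v6_axis: "v6 a b c d e f = a *\<^sub>R axis 1 1 + b *\<^sub>R axis 2 1 + c *\<^sub>R axis 3 1
      + d *\<^sub>R axis 4 1 + e *\<^sub>R axis 5 1 + f *\<^sub>R axis 0 1" for a b c d e f
    by (simp add: vec6_eq_iff axis_def)
  show ?thesis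
    unfolding v6_axis by (intro derivative_intros assms)
qed

lemma casimir1_coords: "casimir1 L = (L$1)^2 + (L$2)^2 + (L$3)^2 + (L$4)^2 + (L$5)^2 + (L$0)^2"
  unfolding casimir1_def sum_UNIV_6 by simp

lemma pfaff_coords: "pfaff L = L$1 * L$0 - L$2 * L$5 + L$3 * L$4"
  unfolding pfaff_def ell_coords by simp

lemma G23_coords: "G23 L = (L$1)^2 + (L$2)^2 + (L$3)^2"
  unfolding G23_def ell_coords by simp

lemma Mh_half_iff:
  "L \<in> Mh (1/2) \<longleftrightarrow> (L$1)^2 + (L$2)^2 + (L$3)^2 + (L$4)^2 + (L$5)^2 + (L$0)^2 = 1
                      \<and> L$1 * L$0 - L$2 * L$5 + L$3 * L$4 = 0"
  unfolding Mh_def casimir1_coords pfaff_coords by simp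

lemma has_derivative_nth_6 [derivative_intros]:
  "((\<lambda>x :: real^6. x$i) has_derivative (\<lambda>v. v$i)) F"
  by (rule bounded_linear_imp_has_derivative) (rule bounded_linear_vec_nth)

lemma frechet_derivative_casimir1:
  "frechet_derivative casimir1 (at L) =
     (\<lambda>v. 2 * (L$1 * v$1 + L$2 * v$2 + L$3 * v$3 + L$4 * v$4 + L$5 * v$5 + L$0 * v$0))"
  unfolding casimir1_coords [abs_def]
  by (rule frechet_derivative_at [symmetric], rule has_derivative_eq_rhs,
      (intro derivative_eq_intros), (rule refl)+, simp add: fun_eq_iff algebra_simps)

lemma frechet_derivative_pfaff:
  "frechet_derivative pfaff (at L) =
     (\<lambda>v. L$0 * v$1 - L$5 * v$2 + L$4 * v$3 + L$3 * v$4 - L$2 * v$5 + L$1 * v$0)"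
  unfolding pfaff_coords [abs_def]
  by (rule frechet_derivative_at [symmetric], rule has_derivative_eq_rhs,
      (intro derivative_eq_intros), (rule refl)+, simp add: fun_eq_iff algebra_simps)

lemma has_derivative_l34: "(ell 3 4 has_derivative (\<lambda>v. v$0)) (at L)"
  unfolding ell_coords [abs_def] by (rule has_derivative_nth_6)

lemma has_derivative_G23:
  "(G23 has_derivative (\<lambda>v. 2 * (L$1 * v$1 + L$2 * v$2 + L$3 * v$3))) (at L)"
  unfolding G23_coords [abs_def]
  by (rule has_derivative_eq_rhs, (intro derivative_eq_intros), (rule refl)+,
      simp add: fun_eq_iff algebra_simps)

lemmas frechet_derivative_l34 = has_derivative_l34 [THEN frechet_derivative_at, symmetric]
lemmas frechet_derivative_G23 = has_derivative_G23 [THEN frechet_derivative_at, symmetric]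

lemma tangent_space_iff:
  "v \<in> tangent_space L \<longleftrightarrow>
     L$1 * v$1 + L$2 * v$2 + L$3 * v$3 + L$4 * v$4 + L$5 * v$5 + L$0 * v$0 = 0 \<and>
     L$0 * v$1 - L$5 * v$2 + L$4 * v$3 + L$3 * v$4 - L$2 * v$5 + L$1 * v$0 = 0"
  unfolding tangent_space_def frechet_derivative_casimir1 frechet_derivative_pfaff mem_Collect_eq
  by (simp only: mult_eq_0_iff) simp

lemma poisson_matrix_mult:
  "poisson_matrix M *v g =
     v6 (M$4 * g$2 + M$5 * g$3 - M$2 * g$4 - M$3 * g$5)
        (- M$4 * g$1 + M$0 * g$3 + M$1 * g$4 - M$3 * g$0)
        (- M$5 * g$1 - M$0 * g$2 + M$1 * g$5 + M$2 * g$0)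
        (M$2 * g$1 - M$1 * g$2 + M$0 * g$5 - M$5 * g$0)
        (M$3 * g$1 - M$1 * g$3 - M$0 * g$4 + M$4 * g$0)
        (M$3 * g$2 - M$2 * g$3 + M$5 * g$4 - M$4 * g$5)"
  unfolding vec6_eq_iff matrix_vector_mult_def poisson_matrix_def
  by (simp add: sum_UNIV_6 pr6_def lp_bracket_def kd_def ell_coords ell_coords [unfolded One_nat_def]
      algebra_simps)

lemma poisson_matrix_mult_in_tangent_space: "poisson_matrix L *v g \<in> tangent_space L"
  unfolding tangent_space_iff poisson_matrix_mult by (simp add: algebra_simps)

lemma ham_vf_l34_G23:
  "ham_vf (\<lambda>M. a * ell 3 4 M + b * G23 M) M =
     v6 (2 * b * (M$2 * M$4 + M$3 * M$5)) (2 * b * (M$3 * M$0 - M$1 * M$4) - a * M$3)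
        (a * M$2 - 2 * b * (M$1 * M$5 + M$2 * M$0)) (- a * M$5) (a * M$4) 0"
proof -
  have "((\<lambda>M. a * ell 3 4 M + b * G23 M) has_derivative
         (\<lambda>v. a * v$0 + b * (2 * (M$1 * v$1 + M$2 * v$2 + M$3 * v$3)))) (at M)"
    by (intro derivative_intros has_derivative_l34 has_derivative_G23)
  then have "grad6 (\<lambda>M. a * ell 3 4 M + b * G23 M) M =
      v6 (2 * b * M$1) (2 * b * M$2) (2 * b * M$3) 0 0 a"
    unfolding grad6_def by (simp add: frechet_derivative_at [symmetric] vec6_eq_iff axis_def)
  then show ?thesis
    unfolding ham_vf_def poisson_matrix_mult by (simp add: algebra_simps)
qed

lemma ham_vf_l34: "ham_vf (ell 3 4) M = v6 0 (- M$3) (M$2) (- M$5) (M$4) 0"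
  using ham_vf_l34_G23 [of 1 0 M] by simp

lemma ham_vf_G23:
  "ham_vf G23 M = v6 (2 * (M$2 * M$4 + M$3 * M$5)) (2 * (M$3 * M$0 - M$1 * M$4))
                    (- 2 * (M$1 * M$5 + M$2 * M$0)) 0 0 0"
  using ham_vf_l34_G23 [of 0 1 M] by simp

lemma frechet_derivative_ham_vf_l34_G23:
  "frechet_derivative (ham_vf (\<lambda>M. a * ell 3 4 M + b * G23 M)) (at L) =
     (\<lambda>h. v6 (2 * b * (h$2 * L$4 + L$2 * h$4 + h$3 * L$5 + L$3 * h$5))
             (2 * b * (h$3 * L$0 + L$3 * h$0 - h$1 * L$4 - L$1 * h$4) - a * h$3)
             (a * h$2 - 2 * b * (h$1 * L$5 + L$1 * h$5 + h$2 * L$0 + L$2 * h$0))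
             (- a * h$5) (a * h$4) 0)"
  unfolding ham_vf_l34_G23 [abs_def]
  by (rule frechet_derivative_at [symmetric])
    (rule has_derivative_v6; rule has_derivative_eq_rhs, (intro derivative_eq_intros), (rule refl)+,
      (simp add: fun_eq_iff algebra_simps)?)

section \<open>The rank of d(l34, G23) on M_h\<close>

definition dmom_image :: "real^6 \<Rightarrow> (real \<times> real) set" where
  "dmom_image L = (\<lambda>v. (v$0, 2 * (L$1 * v$1 + L$2 * v$2 + L$3 * v$3))) ` tangent_space L"

lemma dmom_rank_l34_G23: "dmom_rank (ell 3 4) G23 L = dim (dmom_image L)"
  unfolding dmom_rank_def dmom_image_def frechet_derivative_l34 frechet_derivative_G23 ..

lemma dmom_image_poisson:
  "(L$3 * g$2 - L$2 * g$3 + L$5 * g$4 - L$4 * g$5,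
    2 * ((L$1 * L$4 - L$0 * L$3) * g$2 + (L$1 * L$5 + L$0 * L$2) * g$3 - (L$2 * L$4 + L$3 * L$5) * g$1))
   \<in> dmom_image L" for g :: "real^6"
  unfolding dmom_image_def
  by (rule image_eqI [OF _ poisson_matrix_mult_in_tangent_space [of L g]])
    (simp add: poisson_matrix_mult algebra_simps)

lemma two_le_dim_pairs:
  fixes S :: "(real \<times> real) set"
  assumes "(\<alpha>, 0) \<in> S" "(\<beta>, \<delta>) \<in> S" "\<alpha> \<noteq> 0" "\<delta> \<noteq> 0"
  shows "2 \<le> dim S"
proof -
  have "(\<beta>, \<delta>) \<notin> span {(\<alpha>, 0)}"
    using assms(4) by (auto simp: span_singleton)
  moreover have "independent {(\<alpha>, 0)}"
    using assms(3) by (simp add: independent_insert zero_prod_def)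
  ultimately have "independent {(\<beta>, \<delta>), (\<alpha>, 0)}"
    by (rule independent_insertI)
  moreover have "(\<beta>, \<delta>) \<noteq> (\<alpha>, 0)"
    using assms(4) by simp
  ultimately show ?thesis
    using independent_card_le_dim [of "{(\<beta>, \<delta>), (\<alpha>, 0)}" S] assms(1,2) by simp
qed

lemma dmom_rank_ge_2:
  assumes "L \<in> Mh (1/2)" and "G23 L \<noteq> 1 - (ell 3 4 L)^2" and "G23 L \<noteq> 0"
  shows "2 \<le> dmom_rank (ell 3 4) G23 L"
proof -
  from assms(1) have sphere: "(L$1)^2 + (L$2)^2 + (L$3)^2 + (L$4)^2 + (L$5)^2 + (L$0)^2 = 1"
    and pfaff: "L$1 * L$0 - L$2 * L$5 + L$3 * L$4 = 0"
    by (auto simp: Mh_half_iff)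
  have pos_123: "(L$1)^2 + (L$2)^2 + (L$3)^2 > 0"
    using assms(3) by (simp add: G23_coords add_nonneg_eq_0_iff order_less_le)
  have "(L$4)^2 + (L$5)^2 \<noteq> 0"
    using assms(2) sphere unfolding G23_coords ell_coords by linarith
  then have pos_45: "(L$4)^2 + (L$5)^2 > 0"
    by (simp add: add_nonneg_eq_0_iff order_less_le)
  define w1 where "w1 = - (L$2 * L$4 + L$3 * L$5)"
  define w2 where "w2 = L$1 * L$4 - L$0 * L$3"
  define w3 where "w3 = L$1 * L$5 + L$0 * L$2"
  \<comment> \<open>Lagrange's identity for the cross product of (l12, l13, l14) and (l34, -l24, l23)\<close>
  have "w1^2 + w2^2 + w3^2 = ((L$1)^2 + (L$2)^2 + (L$3)^2) * ((L$4)^2 + (L$5)^2 + (L$0)^2)"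
    unfolding w1_def w2_def w3_def using pfaff by algebra
  then have pos_w: "w1^2 + w2^2 + w3^2 > 0"
    using pos_123 pos_45 by (simp add: add_pos_nonneg)
  have horizontal: "((L$4)^2 + (L$5)^2, 0) \<in> dmom_image L"
    using dmom_image_poisson [of L "v6 0 0 0 (L$5) (- L$4) 0"]
    by (simp add: power2_eq_square algebra_simps)
  have transversal: "(L$3 * w2 - L$2 * w3, 2 * (w1^2 + w2^2 + w3^2)) \<in> dmom_image L"
    using dmom_image_poisson [of L "v6 w1 w2 w3 0 0 0"]
    by (simp add: w1_def w2_def w3_def power2_eq_square algebra_simps)
  show ?thesis
    unfolding dmom_rank_l34_G23 using pos_45 pos_w
    by (intro two_le_dim_pairs [OF horizontal transversal]) auto
qed

lemma dmom_rank_le_1: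
  assumes "L \<in> Mh (1/2)" and "G23 L = 1 - (ell 3 4 L)^2 \<or> G23 L = 0"
  shows "dmom_rank (ell 3 4) G23 L \<le> 1"
proof -
  from assms(1) have sphere: "(L$1)^2 + (L$2)^2 + (L$3)^2 + (L$4)^2 + (L$5)^2 + (L$0)^2 = 1"
    by (simp add: Mh_half_iff)
  obtain w where "\<forall>v \<in> tangent_space L. (v$0, 2 * (L$1 * v$1 + L$2 * v$2 + L$3 * v$3)) = v$0 *\<^sub>R w"
  proof (cases "G23 L = 0")
    case True
    then have "L$1 = 0" "L$2 = 0" "L$3 = 0"
      by (simp_all add: G23_coords add_nonneg_eq_0_iff)
    then show ?thesis
      by (intro that [of "(1, 0)"]) simp
  next
    case False
    then have "(L$4)^2 + (L$5)^2 = 0"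
      using assms(2) sphere unfolding G23_coords ell_coords by linarith
    then have "L$4 = 0" "L$5 = 0"
      by (simp_all add: add_nonneg_eq_0_iff)
    then show ?thesis
      by (intro that [of "(1, - 2 * L$0)"]) (auto simp: tangent_space_iff algebra_simps)
  qed
  then have "dmom_image L \<subseteq> span {w}"
    unfolding dmom_image_def span_singleton by auto
  then show ?thesis
    unfolding dmom_rank_l34_G23 using dim_le_card [of "dmom_image L" "{w}"] by simp
qed

lemma dmom_rank_ge_1:
  assumes "(L$2)^2 + (L$3)^2 + (L$4)^2 + (L$5)^2 \<noteq> 0"
  shows "1 \<le> dmom_rank (ell 3 4) G23 L"
proof -
  obtain \<beta> where "((L$2)^2 + (L$3)^2 + (L$4)^2 + (L$5)^2, \<beta>) \<in> dmom_image L"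
    using dmom_image_poisson [of L "v6 0 (L$3) (- L$2) (L$5) (- L$4) 0"]
    by (simp add: power2_eq_square algebra_simps)
  then have "\<not> dmom_image L \<subseteq> {0}"
    using assms by (auto simp: zero_prod_def)
  then show ?thesis
    unfolding dmom_rank_l34_G23 using dim_eq_0 [of "dmom_image L"] by linarith
qed

lemma critical_point_l34_G23_iff:
  "critical_point (ell 3 4) G23 (1/2) L \<longleftrightarrow>
     L \<in> Mh (1/2) \<and> (G23 L = 1 - (ell 3 4 L)^2 \<or> G23 L = 0)"
  unfolding critical_point_def using dmom_rank_ge_2 dmom_rank_le_1 by fastforce

lemma critical_values_l34_G23:
  "critical_values (ell 3 4) G23 (1/2) =
     {c \<in> (\<lambda>L. (ell 3 4 L, G23 L)) ` Mh (1/2). snd c = 1 - (fst c)^2 \<or> snd c = 0}"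
  unfolding critical_values_def critical_point_l34_G23_iff by auto

lemma dmom_rank_eq_1:
  assumes "L \<in> Mh (1/2)" and "G23 L = 1 - (ell 3 4 L)^2 \<or> G23 L = 0"
    and "(ell 3 4 L, G23 L) \<notin> {(1, 0), (-1, 0), (0, 1)}"
  shows "dmom_rank (ell 3 4) G23 L = 1"
proof -
  from assms(1) have sphere: "(L$1)^2 + (L$2)^2 + (L$3)^2 + (L$4)^2 + (L$5)^2 + (L$0)^2 = 1"
    and pfaff: "L$1 * L$0 - L$2 * L$5 + L$3 * L$4 = 0"
    by (auto simp: Mh_half_iff)
  have "(L$2)^2 + (L$3)^2 + (L$4)^2 + (L$5)^2 \<noteq> 0"
  proof
    assume "(L$2)^2 + (L$3)^2 + (L$4)^2 + (L$5)^2 = 0"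
    then have "L$2 = 0" "L$3 = 0" "L$4 = 0" "L$5 = 0"
      by (simp_all add: add_nonneg_eq_0_iff)
    with sphere pfaff have "(L$1 = 0 \<and> (L$0 = 1 \<or> L$0 = -1)) \<or> (L$0 = 0 \<and> (L$1)^2 = 1)"
      by (auto simp: power2_eq_1_iff)
    then show False
      using assms(3) by (auto simp: G23_coords ell_coords \<open>L$2 = 0\<close> \<open>L$3 = 0\<close>)
  qed
  then show ?thesis
    using dmom_rank_ge_1 dmom_rank_le_1 [OF assms(1,2)] by fastforce
qed

section \<open>Transverse eigenvalues of infinitesimal rotations\<close>

lemma trans_eigenvalue_imaginaryI:
  assumes "x \<in> W" "y \<in> W" "x \<notin> V" "0 \<in> V" "A x = - s *\<^sub>R y" "A y = s *\<^sub>R x"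
  shows "trans_eigenvalue A W V (Complex 0 s)"
  unfolding trans_eigenvalue_def using assms by (intro bexI [of _ x] bexI [of _ y]) auto

lemma trans_eigenvalue_rotation_imaginary:
  fixes A :: "real^6 \<Rightarrow> real^6" and \<pi> :: "real^6 \<Rightarrow> real^3"
  assumes "linear \<pi>"
    and V_kernel: "\<And>v. v \<in> V \<Longrightarrow> \<pi> v = 0"
    and W_kernel: "\<And>w. w \<in> W \<Longrightarrow> \<pi> w = 0 \<Longrightarrow> w \<in> V"
    and rotation: "\<And>w. \<pi> (A w) = \<omega> \<times> \<pi> w"
    and axis_perp: "\<And>w. w \<in> W \<Longrightarrow> \<omega> \<bullet> \<pi> w = 0"
    and "\<omega> \<noteq> 0"
    and "trans_eigenvalue A W V \<mu>"
  shows "Re \<mu> = 0 \<and> Im \<mu> \<noteq> 0"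
proof -
  obtain x y where "x \<in> W" "y \<in> W" "x \<notin> V \<or> y \<notin> V"
    and x_eig: "A x - (Re \<mu> *\<^sub>R x - Im \<mu> *\<^sub>R y) \<in> V"
    and y_eig: "A y - (Im \<mu> *\<^sub>R x + Re \<mu> *\<^sub>R y) \<in> V"
    using assms(7) unfolding trans_eigenvalue_def by blast
  define p q where "p = \<pi> x" and "q = \<pi> y"
  have nonzero: "p \<noteq> 0 \<or> q \<noteq> 0"
    using W_kernel \<open>x \<in> W\<close> \<open>y \<in> W\<close> \<open>x \<notin> V \<or> y \<notin> V\<close> by (auto simp: p_def q_def)
  have rot_p: "\<omega> \<times> p = Re \<mu> *\<^sub>R p - Im \<mu> *\<^sub>R q"
    using V_kernel [OF x_eig] rotation [of x]
    by (simp add: p_def q_def linear_diff [OF \<open>linear \<pi>\<close>] linear_scale [OF \<open>linear \<pi>\<close>])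
  have rot_q: "\<omega> \<times> q = Im \<mu> *\<^sub>R p + Re \<mu> *\<^sub>R q"
    using V_kernel [OF y_eig] rotation [of y]
    by (simp add: p_def q_def linear_diff [OF \<open>linear \<pi>\<close>] linear_add [OF \<open>linear \<pi>\<close>]
        linear_scale [OF \<open>linear \<pi>\<close>])
  \<comment> \<open>\<omega> \<times> _ is skew-adjoint, so pairing the eigen-equations with p and q leaves only Re \<mu>\<close>
  have "p \<bullet> (\<omega> \<times> p) + q \<bullet> (\<omega> \<times> q) = 0"
    by (simp add: dot_cross_self)
  then have "Re \<mu> * (p \<bullet> p + q \<bullet> q) = 0"
    unfolding rot_p rot_q by (simp add: inner_diff_right inner_add_right inner_commute algebra_simps)
  moreover have "p \<bullet> p + q \<bullet> q \<noteq> 0"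
    using nonzero by (simp add: add_nonneg_eq_0_iff)
  ultimately have re: "Re \<mu> = 0"
    by simp
  have "Im \<mu> \<noteq> 0"
  proof
    assume "Im \<mu> = 0"
    then have "\<omega> \<times> p = 0" "\<omega> \<times> q = 0"
      using rot_p rot_q re by simp_all
    moreover have "\<omega> \<bullet> p = 0" "\<omega> \<bullet> q = 0"
      using axis_perp \<open>x \<in> W\<close> \<open>y \<in> W\<close> by (simp_all add: p_def q_def)
    ultimately have "p = 0" "q = 0"
      using norm_and_cross_eq_0 \<open>\<omega> \<noteq> 0\<close> by blast+
    then show False
      using nonzero by simp
  qed
  with re show ?thesis ..
qed

lemma elliptic_transverse_rotationI:
  fixes f1 f2 :: "real^6 \<Rightarrow> real" and a b :: real and L :: "real^6" and \<pi> :: "real^6 \<Rightarrow> real^3"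
  defines "A \<equiv> frechet_derivative (ham_vf (\<lambda>M. a * f1 M + b * f2 M)) (at L)"
    and "W \<equiv> tangent_space L \<inter>
               {v. frechet_derivative f1 (at L) v = 0 \<and> frechet_derivative f2 (at L) v = 0}"
    and "V \<equiv> span {ham_vf f1 L, ham_vf f2 L}"
  assumes nontrivial: "(a, b) \<noteq> (0, 0)"
    and critical: "\<forall>v \<in> tangent_space L.
                     a * frechet_derivative f1 (at L) v + b * frechet_derivative f2 (at L) v = 0"
    and "linear \<pi>" and ham_kernel: "\<pi> (ham_vf f1 L) = 0" "\<pi> (ham_vf f2 L) = 0"
    and W_kernel: "\<And>w. w \<in> W \<Longrightarrow> \<pi> w = 0 \<Longrightarrow> w \<in> V"
    and rotation: "\<And>w. \<pi> (A w) = \<omega> \<times> \<pi> w"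
    and axis_perp: "\<And>w. w \<in> W \<Longrightarrow> \<omega> \<bullet> \<pi> w = 0" and "\<omega> \<noteq> 0"
    and eigenvectors: "x \<in> W" "y \<in> W" "\<pi> x \<noteq> 0" "A x = - s *\<^sub>R y" "A y = s *\<^sub>R x"
  shows "elliptic_transverse f1 f2 L"
proof -
  have V_kernel: "\<pi> v = 0" if "v \<in> V" for v
    using that unfolding V_def
    by (rule linear_eq_0_on_span [OF \<open>linear \<pi>\<close>, rotated]) (use ham_kernel in auto)
  have "trans_eigenvalue A W V (Complex 0 s)"
    using eigenvectors V_kernel by (intro trans_eigenvalue_imaginaryI) (auto simp: V_def span_zero)
  moreover have "Re \<mu> = 0 \<and> Im \<mu> \<noteq> 0" if "trans_eigenvalue A W V \<mu>" for \<mu>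
    using \<open>linear \<pi>\<close> V_kernel W_kernel rotation axis_perp \<open>\<omega> \<noteq> 0\<close> that
    by (rule trans_eigenvalue_rotation_imaginary)
  ultimately show ?thesis
    unfolding elliptic_transverse_def Let_def using nontrivial critical
    by (auto simp: A_def W_def V_def)
qed

lemma perp_2_multiple:
  fixes a b x y :: real
  assumes "a * x + b * y = 0" and "a^2 + b^2 \<noteq> 0"
  shows "\<exists>k. x = - k * b \<and> y = k * a"
proof
  let ?k = "(a * y - b * x) / (a^2 + b^2)"
  have "x * (a^2 + b^2) = - (a * y - b * x) * b" "y * (a^2 + b^2) = (a * y - b * x) * a"
    using assms(1) by algebra+
  then show "x = - ?k * b \<and> y = ?k * a"
    using assms(2) by (simp add: field_simps)
qed

section \<open>Ellipticity along C1 and C2\<close>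

lemma elliptic_transverse_C1:
  assumes "L \<in> Mh (1/2)" and "G23 L = 1 - (ell 3 4 L)^2" and "ell 3 4 L \<notin> {-1, 0, 1}"
  shows "elliptic_transverse (ell 3 4) G23 L"
proof -
  define t where "t = L$0"
  then have L0: "L$0 = t" ..
  from assms(1) have sphere: "(L$1)^2 + (L$2)^2 + (L$3)^2 + (L$4)^2 + (L$5)^2 + (L$0)^2 = 1"
    and pfaff: "L$1 * L$0 - L$2 * L$5 + L$3 * L$4 = 0"
    by (auto simp: Mh_half_iff)
  have t_ne: "t \<noteq> 0" "t^2 \<noteq> 1"
    using assms(3) by (auto simp: t_def ell_coords power2_eq_1_iff)
  have "(L$4)^2 + (L$5)^2 = 0"
    using assms(2) sphere unfolding G23_coords ell_coords by linarith
  then have L4: "L$4 = 0" and L5: "L$5 = 0"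
    by (simp_all add: add_nonneg_eq_0_iff)
  with pfaff t_ne have L1: "L$1 = 0"
    by (simp add: t_def)
  have n23: "(L$2)^2 + (L$3)^2 \<noteq> 0"
    using assms(2) t_ne L1 by (simp add: G23_coords ell_coords t_def)
  have W_iff: "w \<in> tangent_space L \<inter>
      {v. frechet_derivative (ell 3 4) (at L) v = 0 \<and> frechet_derivative G23 (at L) v = 0}
      \<longleftrightarrow> w$0 = 0 \<and> L$2 * w$2 + L$3 * w$3 = 0 \<and> t * w$1 + L$3 * w$4 - L$2 * w$5 = 0" for w
    by (auto simp: tangent_space_iff frechet_derivative_l34 frechet_derivative_G23 L1 L4 L5 t_def)
  show ?thesis
  proof (rule elliptic_transverse_rotationI [where a = "2 * t" and b = 1
        and \<pi> = "\<lambda>h. vector [0, h$4, h$5]" and \<omega> = "vector [2 * t, 0, 0]" and s = "2 * t"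
        and x = "v6 (- L$3 / t) 0 0 1 0 0" and y = "v6 (- L$2 / t) 0 0 0 (-1) 0"],
      unfold W_iff frechet_derivative_ham_vf_l34_G23)
    fix w :: "real^6"
    assume "w$0 = 0 \<and> L$2 * w$2 + L$3 * w$3 = 0 \<and> t * w$1 + L$3 * w$4 - L$2 * w$5 = 0"
      and "vector [0, w$4, w$5] = (0 :: real^3)"
    then have "w$0 = 0" "w$1 = 0" "w$4 = 0" "w$5 = 0" and perp: "L$2 * w$2 + L$3 * w$3 = 0"
      using t_ne by (auto simp: vec_eq_iff forall_3)
    obtain k where "w$2 = - k * L$3" "w$3 = k * L$2"
      using perp_2_multiple [OF perp n23] by blast
    then have "w = k *\<^sub>R ham_vf (ell 3 4) L"
      by (simp add: vec6_eq_iff ham_vf_l34 L4 L5 \<open>w$0 = 0\<close> \<open>w$1 = 0\<close> \<open>w$4 = 0\<close> \<open>w$5 = 0\<close>)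
    then show "w \<in> span {ham_vf (ell 3 4) L, ham_vf G23 L}"
      by (simp add: span_base span_scale)
  qed (auto simp: tangent_space_iff frechet_derivative_l34 frechet_derivative_G23
      ham_vf_l34 ham_vf_G23 L0 L1 L4 L5 t_ne vec_eq_iff [where 'b = 3] forall_3 cross_components
      inner_vec_def sum_3 vec6_eq_iff algebra_simps intro!: linearI)
qed

lemma elliptic_transverse_C2:
  assumes "L \<in> Mh (1/2)" and "G23 L = 0" and "ell 3 4 L \<notin> {-1, 1}"
  shows "elliptic_transverse (ell 3 4) G23 L"
proof -
  define t where "t = L$0"
  then have L0: "L$0 = t" ..
  have L1: "L$1 = 0" and L2: "L$2 = 0" and L3: "L$3 = 0"
    using assms(2) by (simp_all add: G23_coords add_nonneg_eq_0_iff)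
  have sphere: "(L$4)^2 + (L$5)^2 + t^2 = 1"
    using assms(1) by (simp add: Mh_half_iff L0 L1 L2 L3)
  have n45: "(L$4)^2 + (L$5)^2 \<noteq> 0"
    using assms(3) sphere by (auto simp: ell_coords L0 power2_eq_1_iff)
  then have L45: "L$4 \<noteq> 0 \<or> L$5 \<noteq> 0"
    by auto
  have W_iff: "w \<in> tangent_space L \<inter>
      {v. frechet_derivative (ell 3 4) (at L) v = 0 \<and> frechet_derivative G23 (at L) v = 0}
      \<longleftrightarrow> w$0 = 0 \<and> L$4 * w$4 + L$5 * w$5 = 0 \<and> t * w$1 - L$5 * w$2 + L$4 * w$3 = 0" for w
    by (auto simp: tangent_space_iff frechet_derivative_l34 frechet_derivative_G23 L0 L1 L2 L3)
  show ?thesis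
  proof (rule elliptic_transverse_rotationI [where a = 0 and b = 1
        and \<pi> = "\<lambda>h. vector [h$1, h$2, h$3]" and \<omega> = "vector [- 2 * t, 2 * L$5, - 2 * L$4]"
        and s = 2 and x = "v6 0 (L$4) (L$5) 0 0 0"
        and y = "v6 (- ((L$4)^2 + (L$5)^2)) (- t * L$5) (t * L$4) 0 0 0"],
      unfold W_iff frechet_derivative_ham_vf_l34_G23)
    fix w :: "real^6"
    assume "w$0 = 0 \<and> L$4 * w$4 + L$5 * w$5 = 0 \<and> t * w$1 - L$5 * w$2 + L$4 * w$3 = 0"
      and "vector [w$1, w$2, w$3] = (0 :: real^3)"
    then have "w$0 = 0" "w$1 = 0" "w$2 = 0" "w$3 = 0" and perp: "L$4 * w$4 + L$5 * w$5 = 0"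
      by (auto simp: vec_eq_iff forall_3)
    obtain k where "w$4 = - k * L$5" "w$5 = k * L$4"
      using perp_2_multiple [OF perp n45] by blast
    then have "w = k *\<^sub>R ham_vf (ell 3 4) L"
      by (simp add: vec6_eq_iff ham_vf_l34 L2 L3 \<open>w$0 = 0\<close> \<open>w$1 = 0\<close> \<open>w$2 = 0\<close> \<open>w$3 = 0\<close>)
    then show "w \<in> span {ham_vf (ell 3 4) L, ham_vf G23 L}"
      by (simp add: span_base span_scale)
  qed (use L45 in \<open>auto simp: tangent_space_iff frechet_derivative_l34 frechet_derivative_G23
      ham_vf_l34 ham_vf_G23 L0 L1 L2 L3 vec_eq_iff [where 'b = 3] forall_3 cross_components
      inner_vec_def sum_3 vec6_eq_iff power2_eq_square algebra_simps intro!: linearI\<close>,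
      (use sphere in algebra)+)
qed

lemma codim1_elliptic_valueI:
  assumes "c \<in> critical_values f1 f2 h"
    and "\<And>L. L \<in> Mh h \<Longrightarrow> (f1 L, f2 L) = c \<Longrightarrow> dmom_rank f1 f2 L = 1 \<and> elliptic_transverse f1 f2 L"
  shows "codim1_elliptic_value f1 f2 h c"
  unfolding codim1_elliptic_value_def critical_point_def using assms by fastforce

lemma codim1_elliptic_value_C1:
  assumes "c \<in> (\<lambda>L. (ell 3 4 L, G23 L)) ` Mh (1/2)" and "snd c = 1 - (fst c)^2"
    and "c \<notin> {(1, 0), (-1, 0), (0, 1)}"
  shows "codim1_elliptic_value (ell 3 4) G23 (1/2) c"
proof (rule codim1_elliptic_valueI)
  show "c \<in> critical_values (ell 3 4) G23 (1/2)"
    using assms(1,2) by (simp add: critical_values_l34_G23)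
next
  fix L assume L: "L \<in> Mh (1/2)" "(ell 3 4 L, G23 L) = c"
  with assms(2,3) have G: "G23 L = 1 - (ell 3 4 L)^2" and t: "ell 3 4 L \<notin> {-1, 0, 1}"
    by auto
  have "dmom_rank (ell 3 4) G23 L = 1"
    by (rule dmom_rank_eq_1) (use L G assms(3) in auto)
  with elliptic_transverse_C1 [OF L(1) G t]
  show "dmom_rank (ell 3 4) G23 L = 1 \<and> elliptic_transverse (ell 3 4) G23 L"
    by simp
qed

lemma codim1_elliptic_value_C2:
  assumes "c \<in> (\<lambda>L. (ell 3 4 L, G23 L)) ` Mh (1/2)" and "snd c = 0" and "c \<notin> {(1, 0), (-1, 0)}"
  shows "codim1_elliptic_value (ell 3 4) G23 (1/2) c"
proof (rule codim1_elliptic_valueI)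
  show "c \<in> critical_values (ell 3 4) G23 (1/2)"
    using assms(1,2) by (simp add: critical_values_l34_G23)
next
  fix L assume L: "L \<in> Mh (1/2)" "(ell 3 4 L, G23 L) = c"
  with assms(2,3) have G: "G23 L = 0" and t: "ell 3 4 L \<notin> {-1, 1}"
    by auto
  have "dmom_rank (ell 3 4) G23 L = 1"
    by (rule dmom_rank_eq_1) (use L G assms(3) in auto)
  with elliptic_transverse_C2 [OF L(1) G t]
  show "dmom_rank (ell 3 4) G23 L = 1 \<and> elliptic_transverse (ell 3 4) G23 L"
    by simp
qed

theorem proposition7:
  shows "critical_values (ell 3 4) G23 (1/2) =
           {c \<in> (\<lambda>L. (ell 3 4 L, G23 L)) ` Mh (1/2). snd c = 1 - (fst c)^2 \<or> snd c = 0}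
     \<and> (\<forall>c \<in> (\<lambda>L. (ell 3 4 L, G23 L)) ` Mh (1/2).
           snd c = 1 - (fst c)^2 \<and> c \<notin> {(1, 0), (-1, 0), (0, 1)} \<longrightarrow>
           codim1_elliptic_value (ell 3 4) G23 (1/2) c)
     \<and> (\<forall>c \<in> (\<lambda>L. (ell 3 4 L, G23 L)) ` Mh (1/2).
           snd c = 0 \<and> c \<notin> {(1, 0), (-1, 0)} \<longrightarrow>
           codim1_elliptic_value (ell 3 4) G23 (1/2) c)"
  using critical_values_l34_G23 codim1_elliptic_value_C1 codim1_elliptic_value_C2 by simp

end
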